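(* Let $K=(S,L,\to)$ be a Kripke structure and $s,t\in S$. Then $s\leftrightarrow_b^{\Delta}t$ if and only if for every $\mathsf{CTL}_\infty$ formula $\varphi$: $s\models\varphi\iff t\models\varphi$.
   Context: Fix a set $\mathbf{AP}$ of atomic propositions. A Kripke structure is a triple $K=(S,L,\to)$ with $S$ a set of states, $L:S\to\mathcal{P}(\mathbf{AP})$ and $\to\subseteq S\times S$ (not required to be total). A finite path from $s$ is a sequence $s_0,\dots,s_n$ with $s_0=s$ and $s_k\to s_{k+1}$ for $0\le k<n$; an infinite path from $s$ is a sequence $s_0,s_1,\dots$ with $s_0=s$ and $s_k\to s_{k+1}$ for all $k$. A colouring is a function $\mathcal{C}$ from $S$ into an arbitrary set of colours. For a path $\pi=s_0,s_1,\dots$, $\mathcal{C}(\pi)$ is obtained from $\mathcal{C}(s_0),\mathcal{C}(s_1),\dots$ by contracting every maximal (finite or infinite) block of consecutive equal colours to a single colour. The $\mathcal{C}(\pi)$ with $\pi$ a path from $s$ are the $\mathcal{C}$-coloured traces of $s$; $\mathcal{C}(\pi)$ is a divergent $\mathcal{C}$-coloured trace of $s$ if $\pi$ is an infinite path from $s$ and $\mathcal{C}(\pi)$ is finite. A colouring is consistent if any two states of the same colour have the same $L$-label and the same $\mathcal{C}$-coloured traces; a consistent colouring preserves divergence if any two states of the same colour have the same divergent $\mathcal{C}$-coloured traces. $s\leftrightarrow_b^{\Delta}t$ iff there is a consistent, divergence preserving colouring $\mathcal{C}$ with $\mathcal{C}(s)=\mathcal{C}(t)$. $\mathsf{CTL}_\infty$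 formulas: $\varphi::=p\mid\neg\varphi\mid\bigwedge\Phi'\mid\exists(\varphi\,\mathsf{U}\,\varphi)\mid\exists^\infty\mathsf{G}\varphi$, with $p\in\mathbf{AP}$ and $\Phi'$ an arbitrary set of formulas. Semantics: $s\models p$ iff $p\in L(s)$; negation and conjunction as usual; $s\models\exists(\varphi\,\mathsf{U}\,\varphi')$ iff there is a finite path $s_0,\dots,s_k$ from $s$ with $s_k\models\varphi'$ and $s_i\models\varphi$ for all $0\le i<k$; $s\models\exists^\infty\mathsf{G}\varphi$ iff there is an infinite path from $s$ all of whose states satisfy $\varphi$. *)

theory Defs
  imports Main "HOL-Library.Infinite_Set"
begin

text \<open>A Kripke structure is given by a state type 's (S = UNIV), a labelling
  L :: 's => 'ap set and a (not necessarily total) transition relation R.\<close>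

definition fpath :: "('s \<Rightarrow> 's \<Rightarrow> bool) \<Rightarrow> 's \<Rightarrow> 's list \<Rightarrow> bool" where
  "fpath R s xs \<longleftrightarrow> xs \<noteq> [] \<and> hd xs = s \<and>
     (\<forall>k. Suc k < length xs \<longrightarrow> R (xs ! k) (xs ! Suc k))"

definition ipath :: "('s \<Rightarrow> 's \<Rightarrow> bool) \<Rightarrow> 's \<Rightarrow> (nat \<Rightarrow> 's) \<Rightarrow> bool" where
  "ipath R s f \<longleftrightarrow> f 0 = s \<and> (\<forall>k. R (f k) (f (Suc k)))"

fun destut :: "'c list \<Rightarrow> 'c list" where
  "destut [] = []"
| "destut [x] = [x]"
| "destut (x # y # xs) = (if x = y then destut (y # xs) else x # destut (y # xs))"

type_synonym 'c trace = "'c list + (nat \<Rightarrow> 'c)"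

definition ctr_fin :: "('s \<Rightarrow> 'c) \<Rightarrow> 's list \<Rightarrow> 'c trace" where
  "ctr_fin C xs = Inl (destut (map C xs))"

text \<open>Contraction of an infinite colour sequence: if it is eventually constant the
  result is finite (contract any prefix reaching the final block); otherwise it is the
  infinite sequence of block colours, where the (k+1)-th block starts right after the
  k-th index i with g (Suc i) ~= g i.\<close>
definition contract_inf :: "(nat \<Rightarrow> 'c) \<Rightarrow> 'c trace" where
  "contract_inf g =
     (if \<exists>n. \<forall>m\<ge>n. g m = g n
      then Inl (destut (map g [0..<Suc (LEAST n. \<forall>m\<ge>n. g m = g n)]))
      else Inr (\<lambda>k. case k of 0 \<Rightarrow> g 0
                   | Suc j \<Rightarrow> g (Suc (enumerate {i. g (Suc i) \<noteq> g i} j))))"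

definition ctr_inf :: "('s \<Rightarrow> 'c) \<Rightarrow> (nat \<Rightarrow> 's) \<Rightarrow> 'c trace" where
  "ctr_inf C f = contract_inf (C \<circ> f)"

definition ctraces :: "('s \<Rightarrow> 's \<Rightarrow> bool) \<Rightarrow> ('s \<Rightarrow> 'c) \<Rightarrow> 's \<Rightarrow> 'c trace set" where
  "ctraces R C s = {ctr_fin C xs | xs. fpath R s xs} \<union> {ctr_inf C f | f. ipath R s f}"

definition div_ctraces :: "('s \<Rightarrow> 's \<Rightarrow> bool) \<Rightarrow> ('s \<Rightarrow> 'c) \<Rightarrow> 's \<Rightarrow> 'c trace set" where
  "div_ctraces R C s = {ctr_inf C f | f. ipath R s f \<and> (\<exists>xs. ctr_inf C f = Inl xs)}"

definition consistent :: "('s \<Rightarrow> 'ap set) \<Rightarrow> ('s \<Rightarrow> 's \<Rightarrow> bool) \<Rightarrow> ('s \<Rightarrow> 'c) \<Rightarrow> bool" where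
  "consistent L R C \<longleftrightarrow>
     (\<forall>s t. C s = C t \<longrightarrow> L s = L t \<and> ctraces R C s = ctraces R C t)"

definition div_preserving :: "('s \<Rightarrow> 's \<Rightarrow> bool) \<Rightarrow> ('s \<Rightarrow> 'c) \<Rightarrow> bool" where
  "div_preserving R C \<longleftrightarrow> (\<forall>s t. C s = C t \<longrightarrow> div_ctraces R C s = div_ctraces R C t)"

text \<open>Colours are taken in 's set; any
  colouring into an arbitrary colour set can be replaced by its kernel
  s |-> {t. C t = C s} without changing any of the defining conditions.\<close>
definition bbisim_div :: "('s \<Rightarrow> 'ap set) \<Rightarrow> ('s \<Rightarrow> 's \<Rightarrow> bool) \<Rightarrow> 's \<Rightarrow> 's \<Rightarrow> bool" where
  "bbisim_div L R s t \<longleftrightarrow>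
     (\<exists>C :: 's \<Rightarrow> 's set. consistent L R C \<and> div_preserving R C \<and> C s = C t)"

text \<open>CTL_infinity formulas; conjunction over an arbitrary set of formulas is
  represented as conjunction of a family indexed by a set I :: 'i set.\<close>
datatype ('ap, 'i) ctl =
    Atom 'ap
  | Neg "('ap, 'i) ctl"
  | Conj "'i set" "'i \<Rightarrow> ('ap, 'i) ctl"
  | EU "('ap, 'i) ctl" "('ap, 'i) ctl"
  | EG "('ap, 'i) ctl"

primrec sat :: "('s \<Rightarrow> 'ap set) \<Rightarrow> ('s \<Rightarrow> 's \<Rightarrow> bool) \<Rightarrow> ('ap, 'i) ctl \<Rightarrow> 's \<Rightarrow> bool" where
  "sat L R (Atom p) s = (p \<in> L s)"
| "sat L R (Neg \<phi>) s = (\<not> sat L R \<phi> s)"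
| "sat L R (Conj I F) s = (\<forall>i\<in>I. sat L R (F i) s)"
| "sat L R (EU \<phi> \<psi>) s = (\<exists>xs. fpath R s xs \<and> sat L R \<psi> (last xs) \<and>
                               (\<forall>i. Suc i < length xs \<longrightarrow> sat L R \<phi> (xs ! i)))"
| "sat L R (EG \<phi>) s = (\<exists>f. ipath R s f \<and> (\<forall>k. sat L R \<phi> (f k)))"

end

theory Submission
  imports Defs "HOL-Library.Omega_Words_Fun"
begin

text \<open>A consistent colouring allows every path from s to be mimicked from any equally coloured t
  by a path with the same contracted colour trace, and, when the colouring preserves divergence,
  every infinite path by one with the same contraction. The colours visited before the last state
  and the set of colours of an infinite path are determined by these traces, so by induction on
  formulas equally coloured states satisfy the same formulas.

  Conversely, colour every state by its CTL-infinity theory. Since the colour classes inject into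
  the index type of conjunctions, every class has a characteristic formula, the conjunction of
  formulas separating it from each other class. The formulas E(chi U chi') and E-infinity G chi
  then show that a step into another class, and a divergence inside a class, can be matched from
  every state of the same class. Matching the steps of an infinite path one colour block at a time
  and concatenating the resulting segments gives equality of coloured traces; matching a finite
  prefix and then a divergence gives equality of divergent coloured traces.\<close>

lemma set_destut [simp]: "set (destut xs) = set xs"
  by (induction xs rule: destut.induct) auto

lemma destut_Nil_iff [simp]: "destut xs = [] \<longleftrightarrow> xs = []"
  by (induction xs rule: destut.induct) auto

lemma destut_hd: "xs \<noteq> [] \<Longrightarrow> hd (destut xs) = hd xs"
  by (induction xs rule: destut.induct) auto

lemma destut_last: "xs \<noteq> [] \<Longrightarrow> last (destut xs) = last xs"
  by (induction xs rule: destut.induct) auto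

lemma destut_map_eq_last:
  "destut (map C xs) = destut (map C ys) \<Longrightarrow> xs \<noteq> [] \<Longrightarrow> ys \<noteq> [] \<Longrightarrow> C (last xs) = C (last ys)"
  by (metis destut_last last_map list.map_disc_iff)

lemma destut_const_append:
  "xs \<noteq> [] \<Longrightarrow> \<forall>x\<in>set xs. x = a \<Longrightarrow> ys \<noteq> [] \<Longrightarrow> hd ys \<noteq> a \<Longrightarrow>
   destut (xs @ ys) = a # destut ys"
proof (induction xs rule: destut.induct)
  case (2 x)
  then show ?case by (cases ys) auto
qed auto

lemma destut_append_last: "xs \<noteq> [] \<Longrightarrow> destut (xs @ [last xs]) = destut xs"
  by (induction xs rule: destut.induct) auto

lemma destut_eq_Cons_Cons:
  "destut xs = a # b # r \<Longrightarrow>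
   \<exists>k. 0 < k \<and> k < length xs \<and> (\<forall>i<k. xs ! i = a) \<and> destut (drop k xs) = b # r"
proof (induction xs arbitrary: a b r rule: destut.induct)
  case (3 x y xs)
  show ?case
  proof (cases "x = y")
    case True
    with 3 obtain k where "0 < k" "k < length (y # xs)" "\<forall>i<k. (y # xs) ! i = a"
        "destut (drop k (y # xs)) = b # r" by auto
    with True show ?thesis
      by (intro exI[of _ "Suc k"]) (auto simp: nth_Cons split: nat.split)
  next
    case False
    with 3 show ?thesis by (intro exI[of _ 1]) auto
  qed
qed auto

lemma ball_butlast_conv_nth:
  "(\<forall>x\<in>set (butlast xs). P x) \<longleftrightarrow> (\<forall>i. Suc i < length xs \<longrightarrow> P (xs ! i))"
  by (metis in_set_conv_nth length_butlast less_diff_conv nth_butlast Suc_eq_plus1)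

lemma fpath_Nil [simp]: "\<not> fpath R s []"
  by (simp add: fpath_def)

lemma fpath_singleton [simp]: "fpath R s [x] \<longleftrightarrow> x = s"
  by (simp add: fpath_def)

lemma fpath_Cons_Cons [simp]:
  "fpath R s (x # y # xs) \<longleftrightarrow> x = s \<and> R x y \<and> fpath R y (y # xs)"
  unfolding fpath_def by (auto simp: nth_Cons split: nat.split)

lemma fpath_hd: "fpath R s xs \<Longrightarrow> hd xs = s"
  by (simp add: fpath_def)

lemma fpath_nth_0: "fpath R s xs \<Longrightarrow> xs ! 0 = s"
  by (metis fpath_def hd_conv_nth)

lemma fpath_butlast_nonempty: "fpath R s xs \<Longrightarrow> last xs \<noteq> s \<Longrightarrow> butlast xs \<noteq> []"
  by (cases xs; cases "tl xs") auto

lemma fpath_take: "fpath R s xs \<Longrightarrow> 0 < n \<Longrightarrow> fpath R s (take n xs)"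
  unfolding fpath_def by (auto simp: hd_conv_nth)

lemma fpath_butlast_append:
  "fpath R s xs \<Longrightarrow> fpath R (last xs) ys \<Longrightarrow> fpath R s (butlast xs @ ys)"
proof (induction xs arbitrary: s rule: induct_list012)
  case (3 x y zs)
  then have IH: "fpath R y (butlast (y # zs) @ ys)" by auto
  then obtain r where "butlast (y # zs) @ ys = y # r"
    by (metis fpath_hd fpath_Nil list.exhaust list.sel(1))
  with 3 IH show ?case by auto
qed auto

lemma fpath_prefix: "ipath R s f \<Longrightarrow> fpath R s (map f [0..<Suc n])"
  unfolding ipath_def fpath_def by (auto simp: hd_map nth_append simp del: upt_Suc)

lemma ipath_build_iff: "ipath R s (x ## f) \<longleftrightarrow> x = s \<and> R x (f 0) \<and> ipath R (f 0) f"
  unfolding ipath_def by (metis build.simps not0_implies_Suc)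

lemma ipath_butlast_conc:
  assumes "fpath R s xs" and "ipath R (last xs) f"
  shows "ipath R s (butlast xs \<frown> f)"
  using assms
proof (induction xs arbitrary: s rule: induct_list012)
  case (2 x)
  then show ?case by simp
next
  case (3 x y zs)
  then have IH: "ipath R y (butlast (y # zs) \<frown> f)" by auto
  moreover have "(butlast (y # zs) \<frown> f) 0 = y"
    using IH by (simp add: ipath_def)
  ultimately show ?case using 3(3) by (auto simp: ipath_build_iff)
qed simp

lemma const_on_interval:
  "(\<And>i. n \<le> i \<Longrightarrow> i < m \<Longrightarrow> a (Suc i) = a i) \<Longrightarrow> n \<le> m \<Longrightarrow> a m = a n"
  by (induction m) (auto simp: le_Suc_eq)

lemma infinite_changes_if_not_eventually_const:
  assumes "\<not> (\<exists>n. \<forall>m\<ge>n. a m = a n)"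
  shows "infinite {i. a (Suc i) \<noteq> a i}"
proof
  assume "finite {i. a (Suc i) \<noteq> a i}"
  then obtain N where N: "{i. a (Suc i) \<noteq> a i} \<subseteq> {..<N}"
    using finite_nat_bounded by blast
  have "a m = a N" if "N \<le> m" for m
    by (rule const_on_interval[OF _ that]) (use N in force)
  with assms show False by blast
qed

lemma contract_inf_eventually_const:
  assumes "\<forall>m\<ge>N. a m = a N"
  shows "contract_inf a = Inl (destut (map a [0..<Suc N]))"
proof -
  have ex: "\<exists>n. \<forall>m\<ge>n. a m = a n" using assms by blast
  define N0 where "N0 = (LEAST n. \<forall>m\<ge>n. a m = a n)"
  have N0: "\<forall>m\<ge>N0. a m = a N0" unfolding N0_def by (rule LeastI_ex[OF ex])
  have "N0 \<le> N" unfolding N0_def by (rule Least_le) (use assms in blast)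
  then have "destut (map a [0..<Suc N]) = destut (map a [0..<Suc N0])"
  proof (induction N rule: dec_induct)
    case (step n)
    then have "a (Suc n) = a n" using N0 by (metis le_SucI)
    then have "map a [0..<Suc (Suc n)] = map a [0..<Suc n] @ [last (map a [0..<Suc n])]"
      by simp
    moreover have "map a [0..<Suc n] \<noteq> []" by simp
    ultimately show ?case using destut_append_last step.IH by metis
  qed simp
  moreover have "contract_inf a = Inl (destut (map a [0..<Suc N0]))"
    unfolding contract_inf_def N0_def using ex by (simp del: upt_Suc)
  ultimately show ?thesis by simp
qed

lemma contract_inf_InlD: "contract_inf a = Inl xs \<Longrightarrow> \<exists>N. \<forall>m\<ge>N. a m = a N"
  unfolding contract_inf_def by (auto split: if_splits)

lemma enumerate_const_between:
  fixes S :: "nat set"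
  assumes S: "infinite S" and b: "\<And>i. i \<notin> S \<Longrightarrow> b (Suc i) = b i"
  shows "b (enumerate S 0) = b 0" and "b (enumerate S (Suc j)) = b (Suc (enumerate S j))"
proof -
  show "b (enumerate S 0) = b 0"
  proof (rule const_on_interval)
    fix i assume "i < enumerate S 0"
    then have "i \<notin> S" using enumerate_0[of S] by (metis not_less_Least)
    then show "b (Suc i) = b i" by (rule b)
  qed simp
  show "b (enumerate S (Suc j)) = b (Suc (enumerate S j))"
  proof (rule const_on_interval)
    fix i assume i: "Suc (enumerate S j) \<le> i" "i < enumerate S (Suc j)"
    have "i \<notin> S"
    proof
      assume "i \<in> S"
      then have "(LEAST s. s \<in> S \<and> enumerate S j < s) \<le> i" using i by (intro Least_le) auto
      then show False using i enumerate_Suc''[OF S, of j] by simp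
    qed
    then show "b (Suc i) = b i" by (rule b)
  qed (simp add: Suc_leI enumerate_step[OF S])
qed

lemma contract_inf_not_eventually_const:
  assumes "\<not> (\<exists>n. \<forall>m\<ge>n. a m = a n)"
  shows "contract_inf a = Inr (\<lambda>k. case k of 0 \<Rightarrow> a 0
           | Suc j \<Rightarrow> a (Suc (enumerate {i. a (Suc i) \<noteq> a i} j)))"
  using assms unfolding contract_inf_def by simp

lemma contract_inf_InrD:
  assumes "contract_inf a = Inr h"
  shows "a 0 = h 0" and "h (Suc k) \<noteq> h k" and "\<exists>n. a n = h k \<and> a (Suc n) = h (Suc k)"
    and "range a = range h"
proof -
  have ne: "\<not> (\<exists>n. \<forall>m\<ge>n. a m = a n)"
    using assms unfolding contract_inf_def by (auto split: if_splits)
  define S where "S = {i. a (Suc i) \<noteq> a i}"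
  have S: "infinite S" using infinite_changes_if_not_eventually_const[OF ne] S_def by simp
  have h: "h = (\<lambda>k. case k of 0 \<Rightarrow> a 0 | Suc j \<Rightarrow> a (Suc (enumerate S j)))"
    using assms unfolding contract_inf_not_eventually_const[OF ne] S_def by simp
  have a_enum: "a (enumerate S k) = h k" for k
    using enumerate_const_between[OF S, of a] by (cases k) (auto simp: h S_def)
  have "enumerate S k \<in> S" by (rule enumerate_in_set[OF S])
  then have "a (Suc (enumerate S k)) \<noteq> a (enumerate S k)" by (simp add: S_def)
  moreover have "a (Suc (enumerate S k)) = h (Suc k)" by (simp add: h)
  ultimately show "h (Suc k) \<noteq> h k" and "\<exists>n. a n = h k \<and> a (Suc n) = h (Suc k)"
    using a_enum by metis+
  show "a 0 = h 0" by (simp add: h)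
  have "a m \<in> range h" for m
  proof (induction m)
    case (Suc m)
    show ?case
    proof (cases "m \<in> S")
      case True
      then obtain j where "enumerate S j = m" using enumerate_Ex[OF S] by blast
      then show ?thesis by (metis h old.nat.simps(5) rangeI)
    qed (use Suc in \<open>simp add: S_def\<close>)
  qed (metis h old.nat.simps(4) rangeI)
  moreover have "h k \<in> range a" for k by (metis a_enum rangeI)
  ultimately show "range a = range h" by blast
qed

lemma range_contract_inf: "range a = case_sum set range (contract_inf a)"
proof (cases "\<exists>n. \<forall>m\<ge>n. a m = a n")
  case True
  then obtain N where N: "\<forall>m\<ge>N. a m = a N" by blast
  have "range a = a ` {0..<Suc N}"
    using N by (auto simp: image_iff) (metis atLeastLessThan_iff le_imp_less_Suc nat_le_linear zero_le)
  then show ?thesis by (simp add: contract_inf_eventually_const[OF N] del: upt_Suc)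
next
  case False
  then obtain h where "contract_inf a = Inr h"
    using contract_inf_not_eventually_const by blast
  then show ?thesis using contract_inf_InrD(4) by simp
qed

lemma contract_inf_stutter:
  fixes \<beta> :: "nat \<Rightarrow> nat"
  assumes \<beta>_0: "\<beta> 0 = 0" and \<beta>_Suc: "\<And>n. \<beta> (Suc n) = \<beta> n \<or> \<beta> (Suc n) = Suc (\<beta> n)"
    and \<beta>_surj: "surj \<beta>" and h: "\<And>k. h (Suc k) \<noteq> h k"
  shows "contract_inf (h \<circ> \<beta>) = Inr h"
proof -
  define a where "a = h \<circ> \<beta>"
  define S where "S = {i. a (Suc i) \<noteq> a i}"
  have S_iff: "i \<in> S \<longleftrightarrow> \<beta> (Suc i) = Suc (\<beta> i)" for i
    using \<beta>_Suc[of i] h[of "\<beta> i"] by (auto simp: S_def a_def)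
  have "mono \<beta>" unfolding mono_iff_le_Suc using \<beta>_Suc by (metis le_SucI order_refl)
  have ne: "\<not> (\<exists>n. \<forall>m\<ge>n. a m = a n)"
  proof
    assume "\<exists>n. \<forall>m\<ge>n. a m = a n"
    then obtain n where n: "\<forall>m\<ge>n. a m = a n" by blast
    obtain m where m: "\<beta> m = Suc (\<beta> n)" using \<beta>_surj by (metis surjD)
    have "n \<le> m"
    proof (rule ccontr)
      assume "\<not> n \<le> m"
      then have "\<beta> m \<le> \<beta> n" using monoD[OF \<open>mono \<beta>\<close>, of m n] by simp
      with m show False by simp
    qed
    then have "a m = a n" using n by blast
    then show False using m h[of "\<beta> n"] by (simp add: a_def)
  qed
  have S: "infinite S"
    using infinite_changes_if_not_eventually_const[OF ne] by (simp add: S_def)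
  have \<beta>_enum: "\<beta> (enumerate S j) = j" for j
  proof (induction j)
    case 0
    have "\<beta> (enumerate S 0) = \<beta> 0"
      by (rule enumerate_const_between(1)[OF S]) (use S_iff \<beta>_Suc in blast)
    then show ?case using \<beta>_0 by simp
  next
    case (Suc j)
    have "\<beta> (enumerate S (Suc j)) = \<beta> (Suc (enumerate S j))"
      by (rule enumerate_const_between(2)[OF S]) (use S_iff \<beta>_Suc in blast)
    also have "\<dots> = Suc j"
      using S_iff enumerate_in_set[OF S, of j] Suc.IH by simp
    finally show ?case .
  qed
  have "(\<lambda>k. case k of 0 \<Rightarrow> a 0 | Suc j \<Rightarrow> a (Suc (enumerate S j))) = h"
  proof
    fix k
    show "(case k of 0 \<Rightarrow> a 0 | Suc j \<Rightarrow> a (Suc (enumerate S j))) = h k"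
      using S_iff enumerate_in_set[OF S] \<beta>_enum by (cases k) (simp_all add: a_def \<beta>_0)
  qed
  with contract_inf_not_eventually_const[OF ne] show ?thesis
    unfolding S_def[symmetric] a_def[symmetric] by simp
qed

lemma two_le_length_if_hd_neq_last: "xs \<noteq> [] \<Longrightarrow> hd xs \<noteq> last xs \<Longrightarrow> 2 \<le> length xs"
  by (induction xs rule: induct_list012) auto

lemma idx_sequence_Suc_cases:
  assumes "idx_sequence idx" and "n \<in> {idx k..<idx (Suc k)}"
  shows "Suc n \<in> {idx k..<idx (Suc k)} \<or>
    Suc n = idx (Suc k) \<and> Suc n \<in> {idx (Suc k)..<idx (Suc (Suc k))}"
  using assms unfolding idx_sequence_def by (metis atLeastLessThan_iff Suc_leI le_SucI le_neq_implies_less order_refl)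

text \<open>concat_segments Y runs through Y 0, Y 1, ... with the last element of each segment
  dropped (it is expected to reappear as the first element of the next one); seg_of Y n is the
  index of the segment containing position n.\<close>

definition seg_start :: "(nat \<Rightarrow> 'a list) \<Rightarrow> nat \<Rightarrow> nat" where
  "seg_start Y k = (\<Sum>j<k. length (Y j) - 1)"

definition seg_of :: "(nat \<Rightarrow> 'a list) \<Rightarrow> nat \<Rightarrow> nat" where
  "seg_of Y = merge (\<lambda>k n. k) (seg_start Y)"

definition concat_segments :: "(nat \<Rightarrow> 'a list) \<Rightarrow> nat \<Rightarrow> 'a" where
  "concat_segments Y = merge (\<lambda>k n. Y k ! (n - seg_start Y k)) (seg_start Y)"

lemma seg_start_Suc: "seg_start Y (Suc k) = seg_start Y k + (length (Y k) - 1)"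
  by (simp add: seg_start_def)

context
  fixes Y :: "nat \<Rightarrow> 'a list"
  assumes len: "\<And>k. 2 \<le> length (Y k)"
begin

lemma idx_sequence_seg_start: "idx_sequence (seg_start Y)"
proof -
  have "seg_start Y n < seg_start Y (Suc n)" for n using len[of n] by (simp add: seg_start_Suc)
  then show ?thesis by (simp add: idx_sequence_def seg_start_def)
qed

lemma in_segment:
  assumes "n \<in> {seg_start Y k..<seg_start Y (Suc k)}"
  shows "concat_segments Y n = Y k ! (n - seg_start Y k)" and "seg_of Y n = k"
    and "Suc (n - seg_start Y k) < length (Y k)"
  using assms len[of k] merge[OF idx_sequence_seg_start assms, of "\<lambda>k n. k"]
    merge[OF idx_sequence_seg_start assms, of "\<lambda>k n. Y k ! (n - seg_start Y k)"]
  by (auto simp: concat_segments_def seg_of_def seg_start_Suc)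

lemma seg_of_0: "seg_of Y 0 = 0"
  using merge0[OF idx_sequence_seg_start] by (simp add: seg_of_def)

lemma seg_of_Suc: "seg_of Y (Suc n) = seg_of Y n \<or> seg_of Y (Suc n) = Suc (seg_of Y n)"
proof -
  obtain k where k: "n \<in> {seg_start Y k..<seg_start Y (Suc k)}"
    using idx_sequence_interval[OF idx_sequence_seg_start] by blast
  then show ?thesis
    using idx_sequence_Suc_cases[OF idx_sequence_seg_start k] in_segment(2) by metis
qed

lemma surj_seg_of: "surj (seg_of Y)"
  by (metis in_segment(2) idx_sequence_idx[OF idx_sequence_seg_start] surjI)

lemma concat_segments_in_butlast: "concat_segments Y n \<in> set (butlast (Y (seg_of Y n)))"
proof -
  obtain k where k: "n \<in> {seg_start Y k..<seg_start Y (Suc k)}"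
    using idx_sequence_interval[OF idx_sequence_seg_start] by blast
  then have "concat_segments Y n = butlast (Y k) ! (n - seg_start Y k)"
    and "n - seg_start Y k < length (butlast (Y k))"
    using in_segment[OF k] by (auto simp: nth_butlast)
  then show ?thesis using in_segment(2)[OF k] by simp
qed

lemma concat_segments_Suc:
  assumes k: "n \<in> {seg_start Y k..<seg_start Y (Suc k)}" and last: "last (Y k) = Y (Suc k) ! 0"
  shows "concat_segments Y (Suc n) = Y k ! Suc (n - seg_start Y k)"
  using idx_sequence_Suc_cases[OF idx_sequence_seg_start k]
proof
  assume "Suc n \<in> {seg_start Y k..<seg_start Y (Suc k)}"
  moreover have "Suc n - seg_start Y k = Suc (n - seg_start Y k)" using k by (simp add: Suc_diff_le)
  ultimately show ?thesis using in_segment(1) by metis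
next
  assume next_seg: "Suc n = seg_start Y (Suc k) \<and>
    Suc n \<in> {seg_start Y (Suc k)..<seg_start Y (Suc (Suc k))}"
  then have "concat_segments Y (Suc n) = Y (Suc k) ! 0" using in_segment(1) by fastforce
  also have "\<dots> = Y k ! Suc (n - seg_start Y k)"
  proof -
    have "Suc (n - seg_start Y k) = length (Y k) - 1"
      using next_seg k len[of k] by (simp add: seg_start_Suc) arith
    moreover have "Y k \<noteq> []" using len[of k] by auto
    ultimately show ?thesis using last by (simp add: last_conv_nth)
  qed
  finally show ?thesis .
qed

lemma ipath_concat_segments:
  assumes Y: "\<And>k. fpath R (W k) (Y k)" and last: "\<And>k. last (Y k) = W (Suc k)"
  shows "ipath R (W 0) (concat_segments Y)"
  unfolding ipath_def
proof
  have "0 \<in> {seg_start Y 0..<seg_start Y (Suc 0)}"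
    using idx_sequence_seg_start unfolding idx_sequence_def by (metis atLeastLessThan_iff order_refl)
  then show "concat_segments Y 0 = W 0" using in_segment(1) fpath_nth_0[OF Y] by fastforce
next
  show "\<forall>n. R (concat_segments Y n) (concat_segments Y (Suc n))"
  proof
    fix n
    obtain k where k: "n \<in> {seg_start Y k..<seg_start Y (Suc k)}"
      using idx_sequence_interval[OF idx_sequence_seg_start] by blast
    have "last (Y k) = Y (Suc k) ! 0" using fpath_nth_0[OF Y] last by simp
    then have "concat_segments Y (Suc n) = Y k ! Suc (n - seg_start Y k)"
      by (rule concat_segments_Suc[OF k])
    then show "R (concat_segments Y n) (concat_segments Y (Suc n))"
      using in_segment[OF k] Y[of k] by (simp add: fpath_def)
  qed
qed

end

lemma ipath_of_block_steps:
  assumes step: "\<And>k w. C w = h k \<Longrightarrow>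
      \<exists>ys. fpath R w ys \<and> C (last ys) = h (Suc k) \<and> (\<forall>y\<in>set (butlast ys). C y = h k)"
    and h: "\<And>k. h (Suc k) \<noteq> h k" and v: "C v = h 0"
  shows "\<exists>g. ipath R v g \<and> contract_inf (C \<circ> g) = Inr h"
proof -
  define seg where "seg w k =
    (SOME ys. fpath R w ys \<and> C (last ys) = h (Suc k) \<and> (\<forall>y\<in>set (butlast ys). C y = h k))" for w k
  have seg: "fpath R w (seg w k) \<and> C (last (seg w k)) = h (Suc k) \<and>
      (\<forall>y\<in>set (butlast (seg w k)). C y = h k)" if "C w = h k" for w k
    unfolding seg_def by (rule someI_ex) (rule step[OF that])
  define W where "W = rec_nat v (\<lambda>k w. last (seg w k))"
  have W_Suc: "W (Suc k) = last (seg (W k) k)" for k by (simp add: W_def)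
  have C_W: "C (W k) = h k" for k
  proof (induction k)
    case 0
    show ?case by (simp add: W_def v)
  next
    case (Suc k)
    then show ?case using seg[OF Suc] by (simp add: W_Suc)
  qed
  define Y where "Y k = seg (W k) k" for k
  have Y: "fpath R (W k) (Y k)" and C_Y: "\<forall>y\<in>set (butlast (Y k)). C y = h k" for k
    using seg[OF C_W[of k]] by (simp_all add: Y_def)
  have last_Y: "last (Y k) = W (Suc k)" for k by (simp add: W_Suc Y_def)
  have len: "2 \<le> length (Y k)" for k
  proof (rule two_le_length_if_hd_neq_last)
    show "Y k \<noteq> []" using Y[of k] by (auto simp: fpath_def)
    have "C (last (Y k)) \<noteq> C (W k)"
      using seg[OF C_W[of k]] C_W[of k] h[of k] by (simp add: Y_def)
    then show "hd (Y k) \<noteq> last (Y k)" using fpath_hd[OF Y[of k]] by metis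
  qed
  have "C \<circ> concat_segments Y = h \<circ> seg_of Y"
    using concat_segments_in_butlast[of Y, OF len] C_Y by auto
  then have "contract_inf (C \<circ> concat_segments Y) = Inr h"
    using contract_inf_stutter[where h = h, OF seg_of_0[of Y, OF len] seg_of_Suc[of Y, OF len] surj_seg_of[of Y, OF len] h] by simp
  moreover have "ipath R v (concat_segments Y)"
    using ipath_concat_segments[of Y, OF len Y last_Y] by (simp add: W_def)
  ultimately show ?thesis by blast
qed

definition step_transfer :: "('s \<Rightarrow> 's \<Rightarrow> bool) \<Rightarrow> ('s \<Rightarrow> 'c) \<Rightarrow> bool" where
  "step_transfer R C \<longleftrightarrow> (\<forall>x w x'. C x = C w \<longrightarrow> R x x' \<longrightarrow> C x' \<noteq> C x \<longrightarrow>
     (\<exists>ys. fpath R w ys \<and> C (last ys) = C x' \<and> (\<forall>y\<in>set (butlast ys). C y = C x)))"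

definition divergence_transfer :: "('s \<Rightarrow> 's \<Rightarrow> bool) \<Rightarrow> ('s \<Rightarrow> 'c) \<Rightarrow> bool" where
  "divergence_transfer R C \<longleftrightarrow> (\<forall>x w f. C x = C w \<longrightarrow> ipath R x f \<longrightarrow> (\<forall>m. C (f m) = C x) \<longrightarrow>
     (\<exists>g. ipath R w g \<and> (\<forall>m. C (g m) = C x)))"

lemma fpath_transfer:
  assumes T: "step_transfer R C"
  shows "fpath R u xs \<Longrightarrow> C u = C v \<Longrightarrow>
    \<exists>ys. fpath R v ys \<and> destut (map C ys) = destut (map C xs) \<and>
      C ` set (butlast ys) \<subseteq> C ` set (butlast xs)"
proof (induction xs arbitrary: u v rule: induct_list012)
  case (2 x)
  then show ?case by (intro exI[of _ "[v]"]) auto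
next
  case (3 x u' xs)
  have x: "x = u" and e: "R u u'" and fp: "fpath R u' (u' # xs)" using "3.prems" by auto
  show ?case
  proof (cases "C u' = C u")
    case True
    then obtain ys where "fpath R v ys" "destut (map C ys) = destut (map C (u' # xs))"
        "C ` set (butlast ys) \<subseteq> C ` set (butlast (u' # xs))"
      using "3.IH"(2)[OF fp] True "3.prems"(2) by (metis (no_types))
    then show ?thesis using True x by auto
  next
    case False
    then obtain zs where zs: "fpath R v zs" "C (last zs) = C u'" "\<forall>z\<in>set (butlast zs). C z = C u"
      using T "3.prems"(2) e unfolding step_transfer_def by blast
    obtain ys where ys: "fpath R (last zs) ys" "destut (map C ys) = destut (map C (u' # xs))"
        "C ` set (butlast ys) \<subseteq> C ` set (butlast (u' # xs))"
      using "3.IH"(2)[OF fp] zs(2) by metis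
    have "butlast zs \<noteq> []"
      using fpath_butlast_nonempty[OF zs(1)] zs(2) "3.prems"(2) False by metis
    have ys_ne: "ys \<noteq> []" using ys(1) by auto
    then have hd_ys: "hd (map C ys) = C u'" using zs(2) fpath_hd[OF ys(1)] by (simp add: hd_map)
    have "destut (map C (butlast zs @ ys)) = C u # destut (map C ys)"
      using destut_const_append[of "map C (butlast zs)" "C u" "map C ys"]
        \<open>butlast zs \<noteq> []\<close> zs(3) ys_ne hd_ys False by auto
    also have "\<dots> = destut (map C (x # u' # xs))" using ys(2) x False by simp
    finally have "destut (map C (butlast zs @ ys)) = destut (map C (x # u' # xs))" .
    moreover have "C ` set (butlast (butlast zs @ ys)) \<subseteq> C ` set (butlast (x # u' # xs))"
    proof -
      have "C ` set (butlast (butlast zs @ ys)) = C ` set (butlast zs) \<union> C ` set (butlast ys)"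
        using ys_ne by (simp add: butlast_append image_Un)
      also have "\<dots> \<subseteq> {C u} \<union> C ` set (butlast (u' # xs))" using zs(3) ys(3) by blast
      also have "\<dots> = C ` set (butlast (x # u' # xs))" using x by simp
      finally show ?thesis .
    qed
    ultimately show ?thesis using fpath_butlast_append[OF zs(1) ys(1)]
      by (intro exI[of _ "butlast zs @ ys"] conjI)
  qed
qed simp

lemma ipath_transfer_non_divergent:
  assumes T: "step_transfer R C" and uv: "C u = C v" and f: "ipath R u f"
    and h: "contract_inf (C \<circ> f) = Inr h"
  shows "\<exists>g. ipath R v g \<and> contract_inf (C \<circ> g) = Inr h"
proof (rule ipath_of_block_steps)
  fix k w assume w: "C w = h k"
  obtain n where n: "C (f n) = h k" "C (f (Suc n)) = h (Suc k)"
    using contract_inf_InrD(3)[OF h] by auto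
  moreover have "R (f n) (f (Suc n))" using f by (simp add: ipath_def)
  moreover have "C (f (Suc n)) \<noteq> C (f n)" using n contract_inf_InrD(2)[OF h] by simp
  ultimately show "\<exists>ys. fpath R w ys \<and> C (last ys) = h (Suc k) \<and> (\<forall>y\<in>set (butlast ys). C y = h k)"
    using T w unfolding step_transfer_def by metis
next
  show "h (Suc k) \<noteq> h k" for k by (rule contract_inf_InrD(2)[OF h])
  show "C v = h 0" using contract_inf_InrD(1)[OF h] uv f by (simp add: ipath_def)
qed

lemma ctraces_subset:
  assumes T: "step_transfer R C" and uv: "C u = C v"
  shows "ctraces R C u \<subseteq> ctraces R C v"
proof
  fix tr assume "tr \<in> ctraces R C u"
  then consider (fin) xs where "fpath R u xs" "tr = ctr_fin C xs"
    | (inf) f where "ipath R u f" "tr = ctr_inf C f"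
    unfolding ctraces_def by blast
  then show "tr \<in> ctraces R C v"
  proof cases
    case fin
    then obtain ys where "fpath R v ys" "destut (map C ys) = destut (map C xs)"
      using fpath_transfer[OF T _ uv] by metis
    then show ?thesis using fin unfolding ctraces_def ctr_fin_def by auto
  next
    case inf
    show ?thesis
    proof (cases "\<exists>n. \<forall>m\<ge>n. (C \<circ> f) m = (C \<circ> f) n")
      case True
      then obtain N where N: "\<forall>m\<ge>N. (C \<circ> f) m = (C \<circ> f) N" by blast
      have "tr = ctr_fin C (map f [0..<Suc N])"
        using inf contract_inf_eventually_const[OF N]
        unfolding ctr_inf_def ctr_fin_def by (simp add: o_def del: upt_Suc)
      moreover obtain ys where "fpath R v ys" "destut (map C ys) = destut (map C (map f [0..<Suc N]))"
        using fpath_transfer[OF T fpath_prefix[OF inf(1)] uv] by metis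
      ultimately show ?thesis unfolding ctraces_def ctr_fin_def by auto
    next
      case False
      then obtain h where h: "contract_inf (C \<circ> f) = Inr h"
        using contract_inf_not_eventually_const by blast
      then show ?thesis
        using ipath_transfer_non_divergent[OF T uv inf(1) h] inf unfolding ctraces_def ctr_inf_def by auto
    qed
  qed
qed

lemma contract_inf_butlast_conc_const:
  assumes "xs \<noteq> []" and "\<And>m. b m = last xs"
  shows "contract_inf (butlast xs \<frown> b) = Inl (destut xs)"
proof -
  define M where "M = length (butlast xs)"
  have "\<forall>m\<ge>M. (butlast xs \<frown> b) m = (butlast xs \<frown> b) M"
    using assms(2) by (simp add: M_def)
  then have "contract_inf (butlast xs \<frown> b) = Inl (destut (map (butlast xs \<frown> b) [0..<Suc M]))"
    by (rule contract_inf_eventually_const)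
  also have "map (butlast xs \<frown> b) [0..<Suc M] = butlast xs @ [last xs]"
  proof -
    have "map (butlast xs \<frown> b) [0..<M] = butlast xs"
      by (rule nth_equalityI) (simp_all add: M_def)
    then show ?thesis using assms(2) by (simp add: M_def)
  qed
  also have "\<dots> = xs" using assms(1) by simp
  finally show ?thesis .
qed

lemma div_ctraces_subset:
  assumes T: "step_transfer R C" and D: "divergence_transfer R C" and uv: "C u = C v"
  shows "div_ctraces R C u \<subseteq> div_ctraces R C v"
proof
  fix tr assume "tr \<in> div_ctraces R C u"
  then obtain f xs where f: "ipath R u f" and tr: "tr = ctr_inf C f" "ctr_inf C f = Inl xs"
    unfolding div_ctraces_def by blast
  obtain N where N: "\<forall>m\<ge>N. (C \<circ> f) m = (C \<circ> f) N"
    using contract_inf_InlD tr unfolding ctr_inf_def by blast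
  have tr_N: "tr = Inl (destut (map C (map f [0..<Suc N])))"
    using tr contract_inf_eventually_const[OF N] unfolding ctr_inf_def by (simp add: o_def del: upt_Suc)
  obtain ys where ys: "fpath R v ys" "destut (map C ys) = destut (map C (map f [0..<Suc N]))"
    using fpath_transfer[OF T fpath_prefix[OF f] uv] by metis
  have ys_ne: "ys \<noteq> []" using ys(1) by auto
  have "C (last ys) = C (last (map f [0..<Suc N]))"
    using destut_map_eq_last[OF ys(2) ys_ne] by simp
  then have last_ys: "C (last ys) = C (f N)" by simp
  have "ipath R (f N) (suffix N f)" using f by (simp add: ipath_def)
  moreover have "\<forall>m. C (suffix N f m) = C (f N)"
    using N by (metis comp_apply le_add1 suffix_nth)
  ultimately obtain g where g: "ipath R (last ys) g" "\<forall>m. C (g m) = C (f N)"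
    using D[unfolded divergence_transfer_def, rule_format, OF last_ys[symmetric]] by blast
  have "ipath R v (butlast ys \<frown> g)" by (rule ipath_butlast_conc[OF ys(1) g(1)])
  moreover have "ctr_inf C (butlast ys \<frown> g) = tr"
  proof -
    have "ctr_inf C (butlast ys \<frown> g) = contract_inf (butlast (map C ys) \<frown> (C \<circ> g))"
      by (simp add: ctr_inf_def map_butlast)
    also have "\<dots> = Inl (destut (map C ys))"
      using ys_ne g(2) last_ys by (intro contract_inf_butlast_conc_const) (auto simp: last_map)
    finally show ?thesis using tr_N ys(2) by simp
  qed
  ultimately show "tr \<in> div_ctraces R C v"
    using tr_N unfolding div_ctraces_def by blast
qed

lemma fpath_two_blocks:
  assumes ys: "fpath R w ys" and "destut (map C ys) = [a, b]"
  shows "\<exists>zs. fpath R w zs \<and> C (last zs) = b \<and> (\<forall>z\<in>set (butlast zs). C z = a)"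
proof -
  obtain k where k: "0 < k" "k < length ys" "\<forall>i<k. C (ys ! i) = a"
      "destut (drop k (map C ys)) = [b]"
    using destut_eq_Cons_Cons[OF assms(2)] by auto
  have "hd (drop k (map C ys)) = b"
    using destut_hd[of "drop k (map C ys)"] k(2,4) by simp
  then have "C (ys ! k) = b" using k(2) by (simp add: hd_drop_conv_nth)
  moreover have "fpath R w (take (Suc k) ys)" by (rule fpath_take[OF ys]) simp
  moreover have "last (take (Suc k) ys) = ys ! k"
    using k(2) by (simp add: take_Suc_conv_app_nth)
  moreover have "\<forall>z\<in>set (butlast (take (Suc k) ys)). C z = a"
    using k(2,3) by (auto simp: butlast_take in_set_conv_nth)
  ultimately show ?thesis by metis
qed

lemma step_transfer_if_consistent:
  assumes cons: "consistent L R C"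
  shows "step_transfer R C"
  unfolding step_transfer_def
proof (intro allI impI)
  fix x w x' assume xw: "C x = C w" and e: "R x x'" and ne: "C x' \<noteq> C x"
  have "ctr_fin C [x, x'] \<in> ctraces R C x" using e unfolding ctraces_def by force
  moreover have "ctraces R C x = ctraces R C w" using cons xw unfolding consistent_def by blast
  moreover have "ctr_fin C [x, x'] = Inl [C x, C x']" using ne by (simp add: ctr_fin_def)
  ultimately have "Inl [C x, C x'] \<in> ctraces R C w" by simp
  then consider (fin) ys where "fpath R w ys" "destut (map C ys) = [C x, C x']"
    | (inf) g where "ipath R w g" "contract_inf (C \<circ> g) = Inl [C x, C x']"
    unfolding ctraces_def ctr_fin_def ctr_inf_def by auto
  then show "\<exists>ys. fpath R w ys \<and> C (last ys) = C x' \<and> (\<forall>y\<in>set (butlast ys). C y = C x)"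
  proof cases
    case fin
    then show ?thesis by (rule fpath_two_blocks)
  next
    case inf
    obtain N where N: "\<forall>m\<ge>N. (C \<circ> g) m = (C \<circ> g) N"
      using contract_inf_InlD[OF inf(2)] by blast
    have "destut (map C (map g [0..<Suc N])) = [C x, C x']"
      using inf(2) contract_inf_eventually_const[OF N] by (simp add: o_def del: upt_Suc)
    with fpath_prefix[OF inf(1)] show ?thesis by (rule fpath_two_blocks)
  qed
qed

lemma ipath_transfer_if_consistent:
  assumes "consistent L R C" and "div_preserving R C" and "C u = C v" and "ipath R u f"
  shows "\<exists>g. ipath R v g \<and> contract_inf (C \<circ> g) = contract_inf (C \<circ> f)"
proof (cases "\<exists>xs. ctr_inf C f = Inl xs")
  case True
  then have "ctr_inf C f \<in> div_ctraces R C v"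
    using assms unfolding div_preserving_def div_ctraces_def by blast
  then show ?thesis unfolding div_ctraces_def ctr_inf_def by auto
next
  case False
  have "ctr_inf C f \<in> ctraces R C v"
    using assms unfolding consistent_def ctraces_def by blast
  then show ?thesis using False unfolding ctraces_def ctr_fin_def ctr_inf_def by auto
qed

lemma until_transfer:
  assumes T: "step_transfer R C"
    and P: "\<And>u v. C u = C v \<Longrightarrow> P u \<Longrightarrow> P v" and Q: "\<And>u v. C u = C v \<Longrightarrow> Q u \<Longrightarrow> Q v"
    and xs: "fpath R u xs" "Q (last xs)" "\<forall>x\<in>set (butlast xs). P x" and uv: "C u = C v"
  shows "\<exists>ys. fpath R v ys \<and> Q (last ys) \<and> (\<forall>y\<in>set (butlast ys). P y)"
proof -
  obtain ys where ys: "fpath R v ys" "destut (map C ys) = destut (map C xs)"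
      "C ` set (butlast ys) \<subseteq> C ` set (butlast xs)"
    using fpath_transfer[OF T xs(1) uv] by blast
  have "ys \<noteq> []" "xs \<noteq> []" using xs(1) ys(1) by auto
  then have "C (last xs) = C (last ys)" using destut_map_eq_last ys(2) by metis
  then have "Q (last ys)" using Q xs(2) by blast
  moreover have "\<forall>y\<in>set (butlast ys). P y"
  proof
    fix y assume "y \<in> set (butlast ys)"
    then obtain x where "x \<in> set (butlast xs)" "C x = C y" using ys(3) by force
    then show "P y" using P xs(3) by blast
  qed
  ultimately show ?thesis using ys(1) by blast
qed

lemma globally_transfer:
  assumes "consistent L R C" and "div_preserving R C"
    and P: "\<And>u v. C u = C v \<Longrightarrow> P u \<Longrightarrow> P v"
    and f: "ipath R u f" "\<forall>k. P (f k)" and uv: "C u = C v"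
  shows "\<exists>g. ipath R v g \<and> (\<forall>k. P (g k))"
proof -
  obtain g where g: "ipath R v g" "contract_inf (C \<circ> g) = contract_inf (C \<circ> f)"
    using ipath_transfer_if_consistent[OF assms(1,2) uv f(1)] by blast
  have "range (C \<circ> g) = case_sum set range (contract_inf (C \<circ> g))"
    by (rule range_contract_inf)
  also have "\<dots> = range (C \<circ> f)"
    unfolding g(2) by (rule range_contract_inf[symmetric])
  finally have range_eq: "range (C \<circ> g) = range (C \<circ> f)" .
  have "P (g k)" for k
  proof -
    have "(C \<circ> g) k \<in> range (C \<circ> f)" using range_eq by blast
    then obtain m where "C (f m) = C (g k)" by auto
    then show ?thesis using P f(2) by blast
  qed
  then show ?thesis using g(1) by blast
qed

lemma sat_eq_if_same_colour:
  assumes cons: "consistent L R C" and dp: "div_preserving R C"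
  shows "C u = C v \<Longrightarrow> sat L R \<phi> u \<longleftrightarrow> sat L R \<phi> v"
proof (induction \<phi> arbitrary: u v)
  case (Atom p)
  then have "L u = L v" using cons unfolding consistent_def by blast
  then show ?case by simp
next
  case (Neg \<phi>)
  show ?case using Neg.IH[OF Neg.prems] by simp
next
  case (Conj I F)
  have "sat L R (F i) u \<longleftrightarrow> sat L R (F i) v" for i using Conj.IH[of "F i" u v] Conj.prems by simp
  then show ?case by simp
next
  case (EU \<phi> \<psi>)
  have "sat L R (EU \<phi> \<psi>) v" if "sat L R (EU \<phi> \<psi>) u" and "C u = C v" for u v
    using that until_transfer[OF step_transfer_if_consistent[OF cons], of "sat L R \<phi>" "sat L R \<psi>"]
      EU.IH unfolding sat.simps ball_butlast_conv_nth[symmetric] by blast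
  then show ?case using EU.prems by (metis (no_types))
next
  case (EG \<phi>)
  have "sat L R (EG \<phi>) v" if "sat L R (EG \<phi>) u" and "C u = C v" for u v
    using that globally_transfer[OF cons dp, of "sat L R \<phi>"] EG.IH unfolding sat.simps by blast
  then show ?case using EG.prems by (metis (no_types))
qed

lemma characteristic_formula:
  fixes C :: "'s \<Rightarrow> 'c" and g :: "'c \<Rightarrow> 'i"
  assumes g: "inj g"
    and C: "\<And>u v. C u = C v \<longleftrightarrow> (\<forall>\<phi> :: ('ap, 'i) ctl. sat L R \<phi> u \<longleftrightarrow> sat L R \<phi> v)"
  shows "\<exists>\<chi> :: ('ap, 'i) ctl. \<forall>w. sat L R \<chi> w \<longleftrightarrow> C w = C x"
proof -
  have "\<exists>\<delta> :: ('ap, 'i) ctl. sat L R \<delta> x \<and> (\<forall>w. C w = c \<longrightarrow> \<not> sat L R \<delta> w)"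
    if "c \<in> range C - {C x}" for c
  proof -
    from that obtain y where y: "c = C y" "C y \<noteq> C x" by blast
    then obtain \<phi> :: "('ap, 'i) ctl" where \<phi>: "sat L R \<phi> x \<noteq> sat L R \<phi> y"
      using C[of y x] by auto
    define \<delta> where "\<delta> = (if sat L R \<phi> x then \<phi> else Neg \<phi>)"
    have "sat L R \<delta> x" "\<not> sat L R \<delta> y" using \<phi> by (auto simp: \<delta>_def)
    moreover have "sat L R \<delta> w \<longleftrightarrow> sat L R \<delta> y" if "C w = C y" for w
      using C[THEN iffD1, OF that] by blast
    ultimately show ?thesis using y(1) by blast
  qed
  then obtain \<delta> :: "'c \<Rightarrow> ('ap, 'i) ctl" where
    \<delta>: "\<And>c. c \<in> range C - {C x} \<Longrightarrow> sat L R (\<delta> c) x \<and> (\<forall>w. C w = c \<longrightarrow> \<not> sat L R (\<delta> c) w)"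
    by metis
  have "sat L R (Conj (g ` (range C - {C x})) (\<lambda>i. \<delta> (inv g i))) w \<longleftrightarrow> C w = C x" for w
  proof
    assume "sat L R (Conj (g ` (range C - {C x})) (\<lambda>i. \<delta> (inv g i))) w"
    then have "\<forall>c\<in>range C - {C x}. sat L R (\<delta> c) w" using g by simp
    then show "C w = C x" using \<delta>[of "C w"] by blast
  next
    assume "C w = C x"
    then have "sat L R (\<delta> c) w" if "c \<in> range C - {C x}" for c
      using \<delta>[OF that] C[THEN iffD1] by blast
    then show "sat L R (Conj (g ` (range C - {C x})) (\<lambda>i. \<delta> (inv g i))) w" using g by simp
  qed
  then show ?thesis by blast
qed

lemma transfer_if_logical_colouring:
  fixes C :: "'s \<Rightarrow> 'c" and g :: "'c \<Rightarrow> 'i"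
  assumes g: "inj g"
    and C: "\<And>u v. C u = C v \<longleftrightarrow> (\<forall>\<phi> :: ('ap, 'i) ctl. sat L R \<phi> u \<longleftrightarrow> sat L R \<phi> v)"
  shows "step_transfer R C" and "divergence_transfer R C"
proof -
  show "step_transfer R C"
    unfolding step_transfer_def
  proof (intro allI impI)
    fix x w x' assume xw: "C x = C w" and e: "R x x'" and ne: "C x' \<noteq> C x"
    obtain \<chi>1 :: "('ap, 'i) ctl" where \<chi>1: "\<forall>w. sat L R \<chi>1 w \<longleftrightarrow> C w = C x"
      using characteristic_formula[OF g C, of x] by blast
    obtain \<chi>2 :: "('ap, 'i) ctl" where \<chi>2: "\<forall>w. sat L R \<chi>2 w \<longleftrightarrow> C w = C x'"
      using characteristic_formula[OF g C, of x'] by blast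
    have "sat L R (EU \<chi>1 \<chi>2) x" using e \<chi>1 \<chi>2 by (auto intro!: exI[of _ "[x, x']"])
    then have "sat L R (EU \<chi>1 \<chi>2) w" using C[THEN iffD1, OF xw, rule_format, of "EU \<chi>1 \<chi>2"] by simp
    then show "\<exists>ys. fpath R w ys \<and> C (last ys) = C x' \<and> (\<forall>y\<in>set (butlast ys). C y = C x)"
      using \<chi>1 \<chi>2 unfolding ball_butlast_conv_nth by auto
  qed
  show "divergence_transfer R C"
    unfolding divergence_transfer_def
  proof (intro allI impI)
    fix x w f assume xw: "C x = C w" and f: "ipath R x f" and f_C: "\<forall>m. C (f m) = C x"
    obtain \<chi> :: "('ap, 'i) ctl" where \<chi>: "\<forall>w. sat L R \<chi> w \<longleftrightarrow> C w = C x"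
      using characteristic_formula[OF g C, of x] by blast
    have "sat L R (EG \<chi>) x" using f f_C \<chi> by auto
    then have "sat L R (EG \<chi>) w" using C[THEN iffD1, OF xw, rule_format, of "EG \<chi>"] by simp
    then show "\<exists>g. ipath R w g \<and> (\<forall>m. C (g m) = C x)" using \<chi> by auto
  qed
qed

lemma consistent_if_step_transfer:
  assumes T: "step_transfer R C" and L: "\<And>u v. C u = C v \<Longrightarrow> L u = L v"
  shows "consistent L R C"
  unfolding consistent_def
proof (intro allI impI conjI)
  fix u v assume uv: "C u = C v"
  then show "L u = L v" by (rule L)
  show "ctraces R C u = ctraces R C v"
    using ctraces_subset[OF T uv] ctraces_subset[OF T uv[symmetric]] by (rule subset_antisym)
qed

lemma div_preserving_if_transfer:
  assumes "step_transfer R C" and "divergence_transfer R C"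
  shows "div_preserving R C"
  unfolding div_preserving_def
proof (intro allI impI)
  fix u v assume uv: "C u = C v"
  show "div_ctraces R C u = div_ctraces R C v"
    using div_ctraces_subset[OF assms uv] div_ctraces_subset[OF assms uv[symmetric]]
    by (rule subset_antisym)
qed

lemma class_eq_iff:
  "{v. \<forall>\<phi>. Q \<phi> u \<longleftrightarrow> Q \<phi> v} = {v. \<forall>\<phi>. Q \<phi> w \<longleftrightarrow> Q \<phi> v} \<longleftrightarrow> (\<forall>\<phi>. Q \<phi> u \<longleftrightarrow> Q \<phi> w)"
  by (auto simp: set_eq_iff)

theorem theorem7p1:
  fixes L :: "'s \<Rightarrow> 'ap set" and R :: "'s \<Rightarrow> 's \<Rightarrow> bool" and s t :: 's
  assumes "\<exists>g :: 's set \<Rightarrow> 'i. inj g"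
  shows "bbisim_div L R s t \<longleftrightarrow> (\<forall>\<phi> :: ('ap, 'i) ctl. sat L R \<phi> s \<longleftrightarrow> sat L R \<phi> t)"
proof
  assume "bbisim_div L R s t"
  then obtain C :: "'s \<Rightarrow> 's set" where C: "consistent L R C" "div_preserving R C" "C s = C t"
    unfolding bbisim_div_def by blast
  show "\<forall>\<phi> :: ('ap, 'i) ctl. sat L R \<phi> s \<longleftrightarrow> sat L R \<phi> t"
    using sat_eq_if_same_colour[OF C] by blast
next
  assume st: "\<forall>\<phi> :: ('ap, 'i) ctl. sat L R \<phi> s \<longleftrightarrow> sat L R \<phi> t"
  obtain g :: "'s set \<Rightarrow> 'i" where g: "inj g" using assms by blast
  define C where "C u = {v. \<forall>\<phi> :: ('ap, 'i) ctl. sat L R \<phi> u \<longleftrightarrow> sat L R \<phi> v}" for u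
  have C_eq: "C u = C v \<longleftrightarrow> (\<forall>\<phi> :: ('ap, 'i) ctl. sat L R \<phi> u \<longleftrightarrow> sat L R \<phi> v)" for u v
    unfolding C_def by (rule class_eq_iff)
  have "L u = L v" if "C u = C v" for u v
    using C_eq[THEN iffD1, OF that, rule_format, of "Atom _"] by auto
  then have "consistent L R C"
    by (rule consistent_if_step_transfer[OF transfer_if_logical_colouring(1)[OF g C_eq]])
  moreover have "div_preserving R C"
    using div_preserving_if_transfer transfer_if_logical_colouring[OF g C_eq] by blast
  moreover have "C s = C t" using C_eq st by blast
  ultimately show "bbisim_div L R s t" unfolding bbisim_div_def by blast
qed

end
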